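(* Let $b\in\mathbb R^d\setminus\{0\}$ and $\lambda_1\ge\dots\ge\lambda_d>0$. Define $F(y)=-\sum_{i=1}^d|b_i|\sqrt{y_i}-\sqrt{\sum_{i=1}^d\lambda_i^{-1}y_i}$, $B_i=b_i^2(\|b\|_2+\lambda_d^{-1/2})^{-2}$, $\mathcal I=\{i\in[d]:b_i\neq0\}$, $D_F=\{y\in\mathbb R^d:y_i>B_i\ \forall i\in[d],\ \sum_{i=1}^dy_i<1\}$, $$t_0=9\max\Big(\max_{i\in\mathcal I}(b_i^2B_i)^{-1/2},\ \min_{i\in\mathcal I}(\lambda_i^{-1}B_i)^{-1/2}\Big),$$ and for $t>0$, $F^{(t)}(y)=tF(y)-\sum_{i=1}^d\log(y_i-B_i)-\log\big(1-\sum_{i=1}^dy_i\big)$. Then for all $t\ge t_0$, $F^{(t)}$ is self-concordant on $D_F$.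
   Context: A function $G$ satisfies the self-concordance differential inequality on $D\subset\mathbb R^d$ if for every $z\in D$ and $h\in\mathbb R^d$, $|D^3G(z)[h,h,h]|\le2\,(D^2G(z)[h,h])^{3/2}$, where $D^kG(z)[h,\dots,h]$ is the $k$-th directional derivative. $G$ defined on $D$ is self-concordant if it satisfies this inequality on $D$ and $G(z)\to+\infty$ as $z\to\partial D$. *)

theory Defs
  imports "HOL-Analysis.Analysis"
begin

definition dir_deriv :: "nat \<Rightarrow> ('a::real_normed_vector \<Rightarrow> real) \<Rightarrow> 'a \<Rightarrow> 'a \<Rightarrow> real" where
  "dir_deriv k G z h = (deriv ^^ k) (\<lambda>s. G (z + s *\<^sub>R h)) 0"

definition sc_inequality :: "('a::real_normed_vector \<Rightarrow> real) \<Rightarrow> 'a set \<Rightarrow> bool" where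
  "sc_inequality G D \<longleftrightarrow>
     (\<forall>z\<in>D. \<forall>h. \<bar>dir_deriv 3 G z h\<bar> \<le> 2 * (dir_deriv 2 G z h) powr (3/2))"

definition self_concordant :: "('a::real_normed_vector \<Rightarrow> real) \<Rightarrow> 'a set \<Rightarrow> bool" where
  "self_concordant G D \<longleftrightarrow> sc_inequality G D \<and>
     (\<forall>p\<in>frontier D. filterlim G at_top (at p within D))"

end

theory Submission
  imports Defs
begin

(* Index the d + 1 affine slacks s_j of D_F (y_i - B_i and 1 - sum y_i) and the d + 1
   square-root arguments a_j of F (y_i and sum y_i / lam_i) by 'd option.  Along a line the
   log barrier - sum ln s_j has second derivative c = sum (s_j' / s_j)^2 and third derivative
   bounded by 2 c^(3/2).  Each a_j dominates the relative rates of change of the slacks,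
   |a_j'| <= sqrt c * a_j (for a_j = y_i because y_i >= y_i - B_i, for the weighted sum by
   averaging), and |(- sqrt a)'''| = 3/2 (- sqrt a)'' |a'| / a.  So with A = t F'' >= 0 the
   third derivative of F_t is at most 3/2 A sqrt c + 2 c^(3/2) <= 2 (A + c)^(3/2).  At the
   frontier some slack vanishes, so the barrier blows up while t F stays continuous. *)

lemma sum_UNIV_option:
  fixes f :: "'a::finite option \<Rightarrow> 'b::comm_monoid_add"
  shows "(\<Sum>j\<in>UNIV. f j) = f None + (\<Sum>i\<in>UNIV. f (Some i))"
  by (simp add: UNIV_option_conv sum.reindex)

lemma abs_sum_le_scaled_sum:
  fixes x y :: "'j \<Rightarrow> real"
  assumes "\<And>j. j \<in> J \<Longrightarrow> \<bar>x j\<bar> \<le> \<rho> * y j"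
  shows "\<bar>\<Sum>j\<in>J. x j\<bar> \<le> \<rho> * (\<Sum>j\<in>J. y j)"
proof -
  have "\<bar>\<Sum>j\<in>J. x j\<bar> \<le> (\<Sum>j\<in>J. \<bar>x j\<bar>)" by (rule sum_abs)
  also have "\<dots> \<le> (\<Sum>j\<in>J. \<rho> * y j)" using assms by (rule sum_mono)
  finally show ?thesis by (simp add: sum_distrib_left)
qed

lemma abs_le_sqrt_sum_squares:
  fixes x :: "'j \<Rightarrow> real"
  assumes "finite J" and "j \<in> J"
  shows "\<bar>x j\<bar> \<le> sqrt (\<Sum>j\<in>J. (x j)\<^sup>2)"
proof -
  have "(x j)\<^sup>2 \<le> (\<Sum>j\<in>J. (x j)\<^sup>2)"
    using assms by (auto intro: member_le_sum)
  then show ?thesis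
    using real_sqrt_le_mono by fastforce
qed

lemma abs_add_le_two_powr_three_halves:
  fixes a c T\<^sub>1 T\<^sub>2 :: real
  assumes "0 \<le> a" "0 \<le> c"
    and T\<^sub>1: "\<bar>T\<^sub>1\<bar> \<le> 3/2 * a * sqrt c" and T\<^sub>2: "\<bar>T\<^sub>2\<bar> \<le> 2 * c * sqrt c"
  shows "\<bar>T\<^sub>1 + T\<^sub>2\<bar> \<le> 2 * (a + c) powr (3/2)"
proof -
  define x y where "x = sqrt (a + c)" and "y = sqrt c"
  have "0 \<le> y" "y \<le> x" and a: "a = x\<^sup>2 - y\<^sup>2" and c: "c = y\<^sup>2"
    using assms(1,2) by (auto simp: x_def y_def)
  have "0 \<le> (x - y) * (4 * x\<^sup>2 + x * y + y\<^sup>2)"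
    using \<open>0 \<le> y\<close> \<open>y \<le> x\<close> by (intro mult_nonneg_nonneg) auto
  moreover have "2 * x ^ 3 - (3/2 * (x\<^sup>2 - y\<^sup>2) * y + 2 * y\<^sup>2 * y)
      = (x - y) * (4 * x\<^sup>2 + x * y + y\<^sup>2) / 2"
    by (simp add: power2_eq_square power3_eq_cube field_simps)
  ultimately have "3/2 * a * y + 2 * c * y \<le> 2 * x ^ 3"
    unfolding a c by linarith
  moreover have "(a + c) powr (3/2) = x ^ 3"
    using assms(1,2) by (cases "a + c = 0") (simp_all add: x_def powr_half_sqrt[symmetric] powr_power)
  ultimately show ?thesis
    using T\<^sub>1 T\<^sub>2 abs_triangle_ineq[of T\<^sub>1 T\<^sub>2] unfolding y_def by linarith
qed

lemma second_third_deriv_eq: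
  fixes g g' g'' :: "real \<Rightarrow> real"
  assumes g: "\<forall>\<^sub>F s in nhds x. (g has_real_derivative g' s) (at s)"
    and g': "\<forall>\<^sub>F s in nhds x. (g' has_real_derivative g'' s) (at s)"
    and g'': "(g'' has_real_derivative g''') (at x)"
  shows "(deriv ^^ 2) g x = g'' x" and "(deriv ^^ 3) g x = g'''"
proof -
  have "\<forall>\<^sub>F s in nhds x. \<forall>\<^sub>F s' in nhds s. deriv g s' = g' s'"
    using g unfolding eventually_eventually by (rule eventually_mono) (rule DERIV_imp_deriv)
  then have "\<forall>\<^sub>F s in nhds x. (deriv g has_real_derivative g'' s) (at s)"
    using g' by eventually_elim (simp add: DERIV_cong_ev)
  then have dd: "\<forall>\<^sub>F s in nhds x. deriv (deriv g) s = g'' s"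
    by (rule eventually_mono) (rule DERIV_imp_deriv)
  show "(deriv ^^ 2) g x = g'' x"
    by (simp add: numeral_2_eq_2 eventually_nhds_x_imp_x[OF dd])
  from dd g'' have "(deriv (deriv g) has_real_derivative g''') (at x)"
    by (simp add: DERIV_cong_ev)
  then show "(deriv ^^ 3) g x = g'''"
    by (simp add: numeral_3_eq_3 DERIV_imp_deriv)
qed

lemma has_real_derivative_affine_sum:
  fixes c u v :: "'j \<Rightarrow> real"
  assumes f': "\<And>x. 0 < x \<Longrightarrow> (f has_real_derivative f' x) (at x)"
    and pos: "\<forall>j\<in>J. 0 < u j + s * v j"
  shows "((\<lambda>s. \<Sum>j\<in>J. c j * v j ^ k * f (u j + s * v j)) has_real_derivative
           (\<Sum>j\<in>J. c j * v j ^ Suc k * f' (u j + s * v j))) (at s)"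
proof (rule DERIV_sum)
  fix j assume "j \<in> J"
  have "((\<lambda>s. u j + s * v j) has_real_derivative v j) (at s)"
    by (auto intro!: derivative_eq_intros)
  from DERIV_chain2[OF f' this] pos \<open>j \<in> J\<close>
  have "((\<lambda>s. f (u j + s * v j)) has_real_derivative f' (u j + s * v j) * v j) (at s)"
    by blast
  from DERIV_cmult[OF this, of "c j * v j ^ k"]
  show "((\<lambda>s. c j * v j ^ k * f (u j + s * v j)) has_real_derivative
           c j * v j ^ Suc k * f' (u j + s * v j)) (at s)"
    by (simp add: algebra_simps)
qed

lemma minus_sqrt_derivs:
  fixes x :: real
  assumes "0 < x"
  shows "((\<lambda>x. - sqrt x) has_real_derivative - 1 / (2 * sqrt x)) (at x)"
    and "((\<lambda>x. - 1 / (2 * sqrt x)) has_real_derivative 1 / (4 * x * sqrt x)) (at x)"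
    and "((\<lambda>x. 1 / (4 * x * sqrt x)) has_real_derivative - 3 / (8 * x\<^sup>2 * sqrt x)) (at x)"
proof -
  have "sqrt x * sqrt x = x" "0 < sqrt x"
    using assms by simp_all
  then show "((\<lambda>x. - sqrt x) has_real_derivative - 1 / (2 * sqrt x)) (at x)"
    and "((\<lambda>x. - 1 / (2 * sqrt x)) has_real_derivative 1 / (4 * x * sqrt x)) (at x)"
    and "((\<lambda>x. 1 / (4 * x * sqrt x)) has_real_derivative - 3 / (8 * x\<^sup>2 * sqrt x)) (at x)"
    using assms by (auto intro!: derivative_eq_intros simp: field_simps power2_eq_square)
qed

lemma minus_ln_derivs:
  fixes x :: real
  assumes "0 < x"
  shows "((\<lambda>x. - ln x) has_real_derivative - 1 / x) (at x)"
    and "((\<lambda>x. - 1 / x) has_real_derivative 1 / x\<^sup>2) (at x)"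
    and "((\<lambda>x. 1 / x\<^sup>2) has_real_derivative - 2 / x ^ 3) (at x)"
  using assms
  by (auto intro!: derivative_eq_intros simp: field_simps power2_eq_square power3_eq_cube)

lemma sqrt_log_line_derivs:
  fixes \<beta> u v w g :: "'j \<Rightarrow> real" and t :: real
  assumes "finite J" and u: "\<forall>j\<in>J. 0 < u j" and w: "\<forall>j\<in>J. 0 < w j"
  defines "\<phi> \<equiv> \<lambda>s. t * (\<Sum>j\<in>J. \<beta> j * - sqrt (u j + s * v j)) + (\<Sum>j\<in>J. - ln (w j + s * g j))"
  shows "(deriv ^^ 2) \<phi> 0 = t * (\<Sum>j\<in>J. \<beta> j * (v j)\<^sup>2 * (1 / (4 * u j * sqrt (u j))))
                           + (\<Sum>j\<in>J. (g j)\<^sup>2 * (1 / (w j)\<^sup>2))"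
    and "(deriv ^^ 3) \<phi> 0 = t * (\<Sum>j\<in>J. \<beta> j * v j ^ 3 * (- 3 / (8 * (u j)\<^sup>2 * sqrt (u j))))
                           + (\<Sum>j\<in>J. g j ^ 3 * (- 2 / w j ^ 3))"
proof -
  define \<Phi> where "\<Phi> k P Q s = t * (\<Sum>j\<in>J. \<beta> j * v j ^ k * P (u j + s * v j))
                             + (\<Sum>j\<in>J. 1 * g j ^ k * Q (w j + s * g j))"
    for k :: nat and P Q :: "real \<Rightarrow> real" and s
  have \<Phi>': "(\<Phi> k P Q has_real_derivative \<Phi> k' P' Q' s) (at s)"
    if "k' = Suc k" and "\<And>x. 0 < x \<Longrightarrow> (P has_real_derivative P' x) (at x)"
      and "\<And>x. 0 < x \<Longrightarrow> (Q has_real_derivative Q' x) (at x)"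
      and "\<forall>j\<in>J. 0 < u j + s * v j" and "\<forall>j\<in>J. 0 < w j + s * g j"
    for k k' P P' Q Q' s
    unfolding \<Phi>_def \<open>k' = Suc k\<close> using that(2-)
    by (intro DERIV_add DERIV_cmult has_real_derivative_affine_sum)
  have "((\<lambda>s. a + s * b) \<longlongrightarrow> a) (nhds 0)" for a b :: real
    by (auto intro!: tendsto_eq_intros filterlim_ident)
  then have near0: "\<forall>\<^sub>F s in nhds 0. (\<forall>j\<in>J. 0 < u j + s * v j) \<and> (\<forall>j\<in>J. 0 < w j + s * g j)"
    using u w \<open>finite J\<close> by (auto intro!: eventually_conj eventually_ball_finite order_tendstoD(1))
  have \<phi>_eq: "\<phi> = \<Phi> 0 (\<lambda>x. - sqrt x) (\<lambda>x. - ln x)"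
    by (simp add: \<phi>_def \<Phi>_def fun_eq_iff)
  have d1: "\<forall>\<^sub>F s in nhds 0.
      (\<Phi> 0 (\<lambda>x. - sqrt x) (\<lambda>x. - ln x) has_real_derivative
       \<Phi> 1 (\<lambda>x. - 1 / (2 * sqrt x)) (\<lambda>x. - 1 / x) s) (at s)"
    using near0 by eventually_elim (intro \<Phi>' minus_sqrt_derivs minus_ln_derivs; simp)
  have d2: "\<forall>\<^sub>F s in nhds 0.
      (\<Phi> 1 (\<lambda>x. - 1 / (2 * sqrt x)) (\<lambda>x. - 1 / x) has_real_derivative
       \<Phi> 2 (\<lambda>x. 1 / (4 * x * sqrt x)) (\<lambda>x. 1 / x\<^sup>2) s) (at s)"
    using near0 by eventually_elim (intro \<Phi>' minus_sqrt_derivs minus_ln_derivs; simp)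
  have d3: "(\<Phi> 2 (\<lambda>x. 1 / (4 * x * sqrt x)) (\<lambda>x. 1 / x\<^sup>2) has_real_derivative
       \<Phi> 3 (\<lambda>x. - 3 / (8 * x\<^sup>2 * sqrt x)) (\<lambda>x. - 2 / x ^ 3) 0) (at 0)"
    using u w by (intro \<Phi>' minus_sqrt_derivs minus_ln_derivs; simp)
  from second_third_deriv_eq[OF d1 d2 d3]
  show "(deriv ^^ 2) \<phi> 0 = t * (\<Sum>j\<in>J. \<beta> j * (v j)\<^sup>2 * (1 / (4 * u j * sqrt (u j))))
                           + (\<Sum>j\<in>J. (g j)\<^sup>2 * (1 / (w j)\<^sup>2))"
    and "(deriv ^^ 3) \<phi> 0 = t * (\<Sum>j\<in>J. \<beta> j * v j ^ 3 * (- 3 / (8 * (u j)\<^sup>2 * sqrt (u j))))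
                           + (\<Sum>j\<in>J. g j ^ 3 * (- 2 / w j ^ 3))"
    by (simp_all add: \<phi>_eq \<Phi>_def)
qed

lemma sqrt_log_line_third_deriv_bound:
  fixes \<beta> u v w g :: "'j \<Rightarrow> real" and t :: real
  assumes "finite J" and u: "\<forall>j\<in>J. 0 < u j" and w: "\<forall>j\<in>J. 0 < w j"
    and \<beta>: "\<forall>j\<in>J. 0 \<le> \<beta> j" and "0 \<le> t"
    and v: "\<forall>j\<in>J. \<bar>v j\<bar> \<le> sqrt (\<Sum>j\<in>J. (g j / w j)\<^sup>2) * u j"
  shows "\<bar>t * (\<Sum>j\<in>J. \<beta> j * v j ^ 3 * (- 3 / (8 * (u j)\<^sup>2 * sqrt (u j))))
            + (\<Sum>j\<in>J. g j ^ 3 * (- 2 / w j ^ 3))\<bar>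
         \<le> 2 * (t * (\<Sum>j\<in>J. \<beta> j * (v j)\<^sup>2 * (1 / (4 * u j * sqrt (u j))))
                 + (\<Sum>j\<in>J. (g j)\<^sup>2 * (1 / (w j)\<^sup>2))) powr (3/2)"
proof -
  define c where "c = (\<Sum>j\<in>J. (g j / w j)\<^sup>2)"
  define a where "a = (\<Sum>j\<in>J. \<beta> j * (v j)\<^sup>2 * (1 / (4 * u j * sqrt (u j))))"
  have "0 \<le> a"
    using \<beta> u by (auto simp: a_def intro!: sum_nonneg)
  have "0 \<le> c"
    by (auto simp: c_def intro!: sum_nonneg)
  have "\<bar>\<Sum>j\<in>J. \<beta> j * v j ^ 3 * (- 3 / (8 * (u j)\<^sup>2 * sqrt (u j)))\<bar> \<le> 3/2 * sqrt c * a"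
    unfolding a_def
  proof (rule abs_sum_le_scaled_sum)
    fix j assume "j \<in> J"
    then have "0 < u j" "0 \<le> \<beta> j" "\<bar>v j\<bar> / u j \<le> sqrt c"
      using u \<beta> v by (auto simp: c_def pos_divide_le_eq)
    have "\<bar>\<beta> j * v j ^ 3 * (- 3 / (8 * (u j)\<^sup>2 * sqrt (u j)))\<bar>
        = 3/2 * (\<beta> j * (v j)\<^sup>2 * (1 / (4 * u j * sqrt (u j)))) * (\<bar>v j\<bar> / u j)"
      using \<open>0 < u j\<close> \<open>0 \<le> \<beta> j\<close>
      by (simp add: abs_mult power_abs field_simps power2_eq_square power3_eq_cube)
    also have "\<dots> \<le> 3/2 * (\<beta> j * (v j)\<^sup>2 * (1 / (4 * u j * sqrt (u j)))) * sqrt c"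
      using \<open>0 < u j\<close> \<open>0 \<le> \<beta> j\<close> \<open>\<bar>v j\<bar> / u j \<le> sqrt c\<close> by (intro mult_left_mono) auto
    finally show "\<bar>\<beta> j * v j ^ 3 * (- 3 / (8 * (u j)\<^sup>2 * sqrt (u j)))\<bar>
        \<le> 3/2 * sqrt c * (\<beta> j * (v j)\<^sup>2 * (1 / (4 * u j * sqrt (u j))))"
      by (simp add: algebra_simps)
  qed
  from mult_left_mono[OF this \<open>0 \<le> t\<close>]
  have T\<^sub>1: "\<bar>t * (\<Sum>j\<in>J. \<beta> j * v j ^ 3 * (- 3 / (8 * (u j)\<^sup>2 * sqrt (u j))))\<bar>
      \<le> 3/2 * (t * a) * sqrt c"
    using \<open>0 \<le> t\<close> by (simp add: abs_mult algebra_simps)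
  have "\<bar>\<Sum>j\<in>J. (g j / w j) ^ 3\<bar> \<le> sqrt c * (\<Sum>j\<in>J. (g j / w j)\<^sup>2)"
  proof (rule abs_sum_le_scaled_sum)
    fix j assume "j \<in> J"
    have "\<bar>g j / w j\<bar> \<le> sqrt c"
      unfolding c_def using \<open>finite J\<close> \<open>j \<in> J\<close> by (rule abs_le_sqrt_sum_squares)
    moreover have "\<bar>r ^ 3\<bar> = \<bar>r\<bar> * r\<^sup>2" for r :: real
      by (simp add: power3_eq_cube power2_eq_square abs_mult)
    ultimately show "\<bar>(g j / w j) ^ 3\<bar> \<le> sqrt c * (g j / w j)\<^sup>2"
      by (metis mult_right_mono zero_le_power2)
  qed
  moreover have "(\<Sum>j\<in>J. g j ^ 3 * (- 2 / w j ^ 3)) = - 2 * (\<Sum>j\<in>J. (g j / w j) ^ 3)"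
    by (simp add: sum_distrib_left power_divide sum_negf mult.commute)
  ultimately have T\<^sub>2: "\<bar>\<Sum>j\<in>J. g j ^ 3 * (- 2 / w j ^ 3)\<bar> \<le> 2 * c * sqrt c"
    unfolding c_def[symmetric] by (simp add: abs_mult mult.commute)
  have "(\<Sum>j\<in>J. (g j)\<^sup>2 * (1 / (w j)\<^sup>2)) = c"
    by (simp add: c_def power_divide)
  with abs_add_le_two_powr_three_halves[OF _ \<open>0 \<le> c\<close> T\<^sub>1 T\<^sub>2] \<open>0 \<le> a\<close> \<open>0 \<le> t\<close>
  show ?thesis
    unfolding a_def by simp
qed

definition root_weight :: "real ^ 'd \<Rightarrow> 'd option \<Rightarrow> real" where
  "root_weight b j = (case j of None \<Rightarrow> 1 | Some i \<Rightarrow> \<bar>b $ i\<bar>)"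

definition root_arg :: "real ^ 'd \<Rightarrow> real ^ 'd \<Rightarrow> 'd option \<Rightarrow> real" where
  "root_arg lam y j = (case j of None \<Rightarrow> \<Sum>i\<in>UNIV. y $ i / lam $ i | Some i \<Rightarrow> y $ i)"

definition slack_lin :: "real ^ 'd \<Rightarrow> 'd option \<Rightarrow> real" where
  "slack_lin y j = (case j of None \<Rightarrow> - (\<Sum>i\<in>UNIV. y $ i) | Some i \<Rightarrow> y $ i)"

definition slack :: "('d \<Rightarrow> real) \<Rightarrow> real ^ 'd \<Rightarrow> 'd option \<Rightarrow> real" where
  "slack B y j = (case j of None \<Rightarrow> 1 - (\<Sum>i\<in>UNIV. y $ i) | Some i \<Rightarrow> y $ i - B i)"

lemma root_arg_add_scaleR: "root_arg lam (z + s *\<^sub>R h) j = root_arg lam z j + s * root_arg lam h j"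
  by (cases j) (simp_all add: root_arg_def sum.distrib sum_distrib_left add_divide_distrib)

lemma slack_add_scaleR: "slack B (z + s *\<^sub>R h) j = slack B z j + s * slack_lin h j"
  by (cases j) (simp_all add: slack_def slack_lin_def sum.distrib sum_distrib_left algebra_simps)

lemma abs_root_arg_le:
  fixes lam z h :: "real ^ 'd::finite"
  assumes lam: "\<forall>i. 0 < lam $ i" and B: "\<forall>i. 0 \<le> B i" and z: "\<forall>j. 0 < slack B z j"
  shows "\<bar>root_arg lam h j\<bar> \<le> sqrt (\<Sum>k\<in>UNIV. (slack_lin h k / slack B z k)\<^sup>2) * root_arg lam z j"
proof -
  define \<rho> where "\<rho> = sqrt (\<Sum>k\<in>UNIV. (slack_lin h k / slack B z k)\<^sup>2)"
  have coord: "\<bar>h $ i\<bar> \<le> \<rho> * z $ i" for i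
  proof -
    have "0 < z $ i - B i"
      using z[rule_format, of "Some i"] by (simp add: slack_def)
    have "\<bar>slack_lin h (Some i) / slack B z (Some i)\<bar> \<le> \<rho>"
      unfolding \<rho>_def by (rule abs_le_sqrt_sum_squares) simp_all
    then have "\<bar>h $ i\<bar> / (z $ i - B i) \<le> \<rho>"
      using \<open>0 < z $ i - B i\<close> by (simp add: slack_def slack_lin_def abs_div)
    then have "\<bar>h $ i\<bar> \<le> \<rho> * (z $ i - B i)"
      using \<open>0 < z $ i - B i\<close> by (simp add: pos_divide_le_eq)
    also have "\<dots> \<le> \<rho> * z $ i"
      using B by (intro mult_left_mono) (simp_all add: \<rho>_def sum_nonneg)
    finally show ?thesis .
  qed
  show ?thesis
  proof (cases j)
    case None
    have "\<bar>\<Sum>i\<in>UNIV. h $ i / lam $ i\<bar> \<le> \<rho> * (\<Sum>i\<in>UNIV. z $ i / lam $ i)"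
    proof (rule abs_sum_le_scaled_sum)
      fix i
      show "\<bar>h $ i / lam $ i\<bar> \<le> \<rho> * (z $ i / lam $ i)"
        using coord[of i] lam[rule_format, of i] by (simp add: abs_div divide_right_mono)
    qed
    then show ?thesis
      using None by (simp add: root_arg_def \<rho>_def)
  next
    case (Some i)
    then show ?thesis
      using coord by (simp add: root_arg_def \<rho>_def)
  qed
qed

lemma sc_inequality_sqrt_log_barrier:
  fixes b lam :: "real ^ 'd::finite" and B :: "'d \<Rightarrow> real" and t :: real
  assumes lam: "\<forall>i. 0 < lam $ i" and B: "\<forall>i. 0 \<le> B i" and "0 \<le> t"
  defines "G \<equiv> \<lambda>y. t * (\<Sum>j\<in>UNIV. root_weight b j * - sqrt (root_arg lam y j))
                    + (\<Sum>j\<in>UNIV. - ln (slack B y j))"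
  shows "sc_inequality G {y. \<forall>j. 0 < slack B y j}"
  unfolding sc_inequality_def
proof (intro ballI allI)
  fix z h assume "z \<in> {y. \<forall>j. 0 < slack B y j}"
  then have slack_pos: "\<forall>j\<in>UNIV. 0 < slack B z j"
    by simp
  have "0 < z $ i" for i
    using slack_pos[rule_format, of "Some i"] B[rule_format, of i] by (simp add: slack_def)
  then have root_pos: "\<forall>j\<in>UNIV. 0 < root_arg lam z j"
    using lam by (auto simp: root_arg_def split: option.split intro!: sum_pos)
  have weight_nonneg: "\<forall>j\<in>UNIV. 0 \<le> root_weight b j"
    by (simp add: root_weight_def split: option.split)
  have "(\<lambda>s. G (z + s *\<^sub>R h))
      = (\<lambda>s. t * (\<Sum>j\<in>UNIV. root_weight b j * - sqrt (root_arg lam z j + s * root_arg lam h j))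
             + (\<Sum>j\<in>UNIV. - ln (slack B z j + s * slack_lin h j)))"
    by (simp add: G_def root_arg_add_scaleR slack_add_scaleR)
  with sqrt_log_line_derivs[OF finite_class.finite_UNIV root_pos slack_pos]
       sqrt_log_line_third_deriv_bound
         [OF finite_class.finite_UNIV root_pos slack_pos weight_nonneg \<open>0 \<le> t\<close>]
       abs_root_arg_le[OF lam B] slack_pos
  show "\<bar>dir_deriv 3 G z h\<bar> \<le> 2 * dir_deriv 2 G z h powr (3 / 2)"
    unfolding dir_deriv_def by simp
qed

lemma frontier_Collect_pos_zero:
  fixes g :: "'j \<Rightarrow> 'a::topological_space \<Rightarrow> real"
  assumes "finite J" and cont: "\<And>j. j \<in> J \<Longrightarrow> continuous_on UNIV (g j)"
    and p: "p \<in> frontier {y. \<forall>j\<in>J. 0 < g j y}"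
  shows "\<exists>j\<in>J. g j p = 0"
proof -
  have "{y. \<forall>j\<in>J. 0 < g j y} = (\<Inter>j\<in>J. {y. 0 < g j y})"
    by auto
  also have "open \<dots>"
    using \<open>finite J\<close> cont by (intro open_INT ballI open_Collect_less continuous_on_const) auto
  finally have "p \<notin> {y. \<forall>j\<in>J. 0 < g j y}"
    using p by (simp add: frontier_def interior_open)
  moreover have "closure {y. \<forall>j\<in>J. 0 < g j y} \<subseteq> (\<Inter>j\<in>J. {y. 0 \<le> g j y})"
    using cont by (intro closure_minimal closed_INT ballI closed_Collect_le continuous_on_const) auto
  then have "\<forall>j\<in>J. 0 \<le> g j p"
    using p by (auto simp: frontier_def)
  ultimately show ?thesis
    by force
qed

lemma filterlim_sum_neg_ln_at_top:
  fixes g :: "'j \<Rightarrow> 'a \<Rightarrow> real"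
  assumes "finite J" and "j \<in> J" and lim: "(g j \<longlongrightarrow> 0) F"
    and bounds: "\<forall>\<^sub>F x in F. \<forall>i\<in>J. 0 < g i x \<and> g i x \<le> 1"
  shows "filterlim (\<lambda>x. \<Sum>i\<in>J. - ln (g i x)) at_top F"
proof (rule filterlim_at_top_mono)
  have "filterlim (g j) (at_right 0) F"
    using bounds \<open>j \<in> J\<close> by (intro tendsto_imp_filterlim_at_right[OF lim]) (auto elim: eventually_mono)
  then show "filterlim (\<lambda>x. - ln (g j x)) at_top F"
    by (simp add: filterlim_uminus_at_top filterlim_compose[OF ln_at_0])
  show "\<forall>\<^sub>F x in F. - ln (g j x) \<le> (\<Sum>i\<in>J. - ln (g i x))"
    using bounds
  proof eventually_elim
    case (elim x)
    then show ?case
      using \<open>finite J\<close> \<open>j \<in> J\<close> by (intro member_le_sum) auto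
  qed
qed

lemma filterlim_barrier_at_frontier:
  fixes B :: "'d::finite \<Rightarrow> real"
  defines "D \<equiv> {y. \<forall>j. 0 < slack B y j}"
  assumes B: "\<forall>i. 0 \<le> B i" and p: "p \<in> frontier D"
  shows "filterlim (\<lambda>y. \<Sum>j\<in>UNIV. - ln (slack B y j)) at_top (at p within D)"
proof -
  have "continuous_on UNIV (\<lambda>y. slack B y j)" for j
    by (cases j) (auto simp: slack_def intro!: continuous_intros)
  then obtain j where "slack B p j = 0"
    using frontier_Collect_pos_zero[where J = UNIV and g = "\<lambda>j y. slack B y j"] p
    by (auto simp: D_def)
  moreover have "((\<lambda>y. slack B y j) \<longlongrightarrow> slack B p j) (at p within D)"
    by (cases j) (auto simp: slack_def intro!: tendsto_intros)
  moreover have "0 < slack B y j \<and> slack B y j \<le> 1" if "y \<in> D" for y j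
  proof -
    have "0 \<le> y $ i" for i
      using that B[rule_format, of i] by (auto simp: D_def slack_def dest: spec[of _ "Some i"])
    then have "y $ i \<le> (\<Sum>i\<in>UNIV. y $ i)" "0 \<le> (\<Sum>i\<in>UNIV. y $ i)" for i
      by (auto intro!: member_le_sum sum_nonneg)
    moreover have "(\<Sum>i\<in>UNIV. y $ i) < 1" "0 < slack B y j"
      using that by (auto simp: D_def slack_def dest: spec[of _ None])
    ultimately show ?thesis
      using B by (cases j) (auto simp: slack_def, smt (verit))
  qed
  ultimately show ?thesis
    by (intro filterlim_sum_neg_ln_at_top[where j = j]) (auto simp: eventually_at_filter)
qed

theorem lemma2:
  fixes b lam :: "real ^ ('d::{finite,linorder})"
    and F :: "real ^ ('d::{finite,linorder}) \<Rightarrow> real" and B :: "('d::{finite,linorder}) \<Rightarrow> real" and I :: "('d::{finite,linorder}) set"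
    and D\<^sub>F :: "(real ^ ('d::{finite,linorder})) set" and t\<^sub>0 :: real
    and Ft :: "real \<Rightarrow> real ^ ('d::{finite,linorder}) \<Rightarrow> real"
  assumes b_nz: "b \<noteq> 0"
    and lam_pos: "\<forall>i. lam $ i > 0"
    and lam_dec: "\<forall>i j. i \<le> j \<longrightarrow> lam $ j \<le> lam $ i"
    and F_def: "F = (\<lambda>y. - (\<Sum>i\<in>UNIV. \<bar>b $ i\<bar> * sqrt (y $ i))
                          - sqrt (\<Sum>i\<in>UNIV. y $ i / lam $ i))"
    and B_def: "B = (\<lambda>i. (b $ i)\<^sup>2 * (norm b + (lam $ (Max UNIV)) powr (-1/2)) powr (-2))"
    and I_def: "I = {i. b $ i \<noteq> 0}"
    and D_def: "D\<^sub>F = {y. (\<forall>i. y $ i > B i) \<and> (\<Sum>i\<in>UNIV. y $ i) < 1}"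
    and t0_def: "t\<^sub>0 = 9 * max (Max ((\<lambda>i. ((b $ i)\<^sup>2 * B i) powr (-1/2)) ` I))
                               (Min ((\<lambda>i. (B i / lam $ i) powr (-1/2)) ` I))"
    and Ft_def: "Ft = (\<lambda>t y. t * F y - (\<Sum>i\<in>UNIV. ln (y $ i - B i))
                              - ln (1 - (\<Sum>i\<in>UNIV. y $ i)))"
  shows "\<forall>t\<ge>t\<^sub>0. self_concordant (Ft t) D\<^sub>F"
proof (intro allI impI)
  fix t assume "t\<^sub>0 \<le> t"
  obtain k where "b $ k \<noteq> 0"
    using b_nz by (metis vec_eq_iff zero_index)
  then have "0 \<le> Max ((\<lambda>i. ((b $ i)\<^sup>2 * B i) powr (-1/2)) ` I)"
    unfolding I_def by (subst Max_ge_iff) auto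
  with \<open>t\<^sub>0 \<le> t\<close> have "0 \<le> t"
    unfolding t0_def by linarith
  have B: "\<forall>i. 0 \<le> B i"
    unfolding B_def by simp
  have D: "D\<^sub>F = {y. \<forall>j. 0 < slack B y j}"
    unfolding D_def by (auto simp: split_option_all slack_def)
  have F: "F = (\<lambda>y. \<Sum>j\<in>UNIV. root_weight b j * - sqrt (root_arg lam y j))"
    unfolding F_def by (simp add: fun_eq_iff sum_UNIV_option root_weight_def root_arg_def sum_negf)
  have Ft: "Ft t = (\<lambda>y. t * F y + (\<Sum>j\<in>UNIV. - ln (slack B y j)))"
    unfolding Ft_def by (simp add: fun_eq_iff sum_UNIV_option slack_def sum_negf)
  show "self_concordant (Ft t) D\<^sub>F"
    unfolding self_concordant_def
  proof (intro conjI ballI)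
    show "sc_inequality (Ft t) D\<^sub>F"
      unfolding Ft D using sc_inequality_sqrt_log_barrier[OF lam_pos B \<open>0 \<le> t\<close>] by (simp add: F)
  next
    fix p assume "p \<in> frontier D\<^sub>F"
    have "((\<lambda>y. t * F y) \<longlongrightarrow> t * F p) (at p within D\<^sub>F)"
      using lam_pos unfolding F_def
      by (intro tendsto_intros tendsto_vec_nth tendsto_ident_at) (simp add: less_imp_neq[symmetric])
    moreover have "filterlim (\<lambda>y. \<Sum>j\<in>UNIV. - ln (slack B y j)) at_top (at p within D\<^sub>F)"
      using filterlim_barrier_at_frontier[OF B] \<open>p \<in> frontier D\<^sub>F\<close> unfolding D .
    ultimately show "filterlim (Ft t) at_top (at p within D\<^sub>F)"
      unfolding Ft by (rule filterlim_tendsto_add_at_top)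
  qed
qed

end
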